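(* For any $k\in\mathbb{Z}$ with $|k|\geq1$, any $\lambda\in\mathbb{R}$ and any $w\in D_k$, with $F$ defined as in the context, $$\operatorname{Re}\langle F,w\rangle\gtrsim\|w'\|_{L^2}^2+\Big\langle\Big(\frac{k^2}{r^2}+r^2\Big)w,w\Big\rangle,$$ where the implicit constant is independent of $k,\beta_k,\lambda,w$.
   Context: Functions are complex-valued on $r\in(0,\infty)$; $\langle f,g\rangle=\int_0^\infty f\bar g\,dr$, $\|\cdot\|_{L^2}$ the $L^2(0,\infty)$ norm. $\beta_k\in\mathbb{R}$. $D_k$ is the set of $w\in H^2_{loc}(0,\infty)\cap L^2(0,\infty)$ with $-w''+\big(\frac{k^2-1/4}{r^2}+\frac{r^2}{16}-\frac12\big)w+i\beta_k\frac{w}{r^2}\in L^2(0,\infty)$ (for $|k|\ge1$ equivalently $w'',w/r^2,r^2w\in L^2$); such $w$ satisfy $w(0)=w(\infty)=0$. $F=-\big[w''-\big(\frac{k^2-1/4}{r^2}+\frac{r^2}{16}-\frac12\big)w\big]+i\beta_k\big(\frac1{r^2}-\lambda\big)w$. *)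

theory Defs
  imports "HOL-Analysis.Analysis"
begin

definition L2pos :: "(real \<Rightarrow> complex) \<Rightarrow> bool" where
  "L2pos f \<longleftrightarrow> set_borel_measurable lborel {0<..} f \<and>
     set_integrable lborel {0<..} (\<lambda>r. (cmod (f r))\<^sup>2)"

definition ip :: "(real \<Rightarrow> complex) \<Rightarrow> (real \<Rightarrow> complex) \<Rightarrow> complex" where
  "ip f g = (LINT r:{0<..}|lborel. f r * cnj (g r))"

text \<open>w in H^2_loc(0,oo), with classical derivative w1 and weak second derivative w2
  (w1 locally absolutely continuous with locally square integrable derivative w2).\<close>
definition H2loc :: "(real \<Rightarrow> complex) \<Rightarrow> (real \<Rightarrow> complex) \<Rightarrow> (real \<Rightarrow> complex) \<Rightarrow> bool" where
  "H2loc w w1 w2 \<longleftrightarrow>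
     (\<forall>r>0. (w has_vector_derivative w1 r) (at r)) \<and>
     (\<forall>a b. 0 < a \<longrightarrow> a \<le> b \<longrightarrow>
        set_integrable lborel {a..b} w2 \<and>
        set_integrable lborel {a..b} (\<lambda>r. (cmod (w2 r))\<^sup>2) \<and>
        w1 b - w1 a = (LINT r:{a..b}|lborel. w2 r))"

definition pot :: "int \<Rightarrow> real \<Rightarrow> real" where
  "pot k r = (of_int k ^ 2 - 1/4) / r\<^sup>2 + r\<^sup>2 / 16 - 1/2"

definition Lop :: "int \<Rightarrow> real \<Rightarrow> (real \<Rightarrow> complex) \<Rightarrow> (real \<Rightarrow> complex) \<Rightarrow> real \<Rightarrow> complex" where
  "Lop k \<beta> w w2 r = - w2 r + complex_of_real (pot k r) * w r
      + \<i> * complex_of_real \<beta> * w r / complex_of_real (r\<^sup>2)"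

definition Dk :: "int \<Rightarrow> real \<Rightarrow> (real \<Rightarrow> complex) \<Rightarrow> (real \<Rightarrow> complex) \<Rightarrow> (real \<Rightarrow> complex) \<Rightarrow> bool" where
  "Dk k \<beta> w w1 w2 \<longleftrightarrow> H2loc w w1 w2 \<and> L2pos w \<and> L2pos (Lop k \<beta> w w2)"

definition Fop :: "int \<Rightarrow> real \<Rightarrow> real \<Rightarrow> (real \<Rightarrow> complex) \<Rightarrow> (real \<Rightarrow> complex) \<Rightarrow> real \<Rightarrow> complex" where
  "Fop k \<beta> lam w w2 r = - (w2 r - complex_of_real (pot k r) * w r)
      + \<i> * complex_of_real \<beta> * complex_of_real (1 / r\<^sup>2 - lam) * w r"

end

theory Submission
  imports Defs
begin

text \<open>
  The \<open>\<beta>\<close>-terms of \<open>F\<close> only contribute to the imaginary part, so with \<open>\<rho> = |w|\<^sup>2\<close> and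
  \<open>V = pot k\<close> the real part of \<open>\<langle>F, w\<rangle>\<close> is \<open>\<integral> - Re (w'' cnj w) + V \<rho>\<close>. On \<open>[a, b]\<close> we integrate
  by parts and add the exact derivative of \<open>g \<rho>\<close> for a multiplier \<open>g\<close>:
  \<open>\<integral>\<^sub>a\<^sup>b Re (F cnj w) = B(a) - B(b) + \<integral>\<^sub>a\<^sup>b |w'|\<^sup>2 + g \<rho>' + (V + g') \<rho>\<close> with \<open>B = \<rho>'/2 + g \<rho>\<close>.

  For \<open>g = 1/(2r)\<close> the integrand is at least \<open>|w' + w/(2r)|\<^sup>2 + r\<^sup>2 \<rho>/16 - \<rho>/2\<close> (here \<open>k\<^sup>2 \<ge> 1\<close>
  is used), and \<open>B = (r \<rho>)'/(2r)\<close> is small at suitable points near \<open>0\<close> and \<open>\<infinity>\<close> because \<open>\<rho>\<close> is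
  integrable. So \<open>|w' + w/(2r)|\<^sup>2 = |(\<surd>r w)'|\<^sup>2 / r\<close> and \<open>r\<^sup>2 \<rho>\<close> are integrable; the former forces
  \<open>\<rho>(r) = o(r)\<close> at \<open>0\<close>. For \<open>g = -3/(4r) + r/8\<close> the integrand dominates
  \<open>(|w'|\<^sup>2 + (k\<^sup>2/r\<^sup>2 + r\<^sup>2) \<rho>) / 32\<close>, and since \<open>\<rho> = o(r)\<close> at \<open>0\<close> and \<open>r \<rho>\<close> is integrable, the
  boundary terms can again be made arbitrarily small at both ends. This gives \<open>C = 1/32\<close>.
\<close>

section \<open>Integrals on intervals of the half-line\<close>

lemma set_integrable_Icc_if_continuous_on_Ioi:
  fixes f :: "real \<Rightarrow> 'a::{banach, second_countable_topology}"
  assumes "continuous_on {0<..} f" "0 < a"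
  shows "set_integrable lborel {a..b} f"
  using assms by (intro borel_integrable_atLeastAtMost' continuous_on_subset[OF assms(1)]) auto

lemma set_integral_Icc_FTC:
  fixes f F :: "real \<Rightarrow> 'a::euclidean_space"
  assumes "a \<le> b" "continuous_on {a..b} f"
    and "\<And>x. a \<le> x \<Longrightarrow> x \<le> b \<Longrightarrow> (F has_vector_derivative f x) (at x)"
  shows "(LINT x:{a..b}|lborel. f x) = F b - F a"
  unfolding set_lebesgue_integral_def
  using assms by (intro integral_FTC_atLeastAtMost) (auto intro: has_vector_derivative_at_within)

lemma set_integral_Re:
  assumes "set_integrable M A (f :: _ \<Rightarrow> complex)"
  shows "set_integrable M A (\<lambda>x. Re (f x))" "(LINT x:A|M. Re (f x)) = Re (LINT x:A|M. f x)"
proof -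
  have f: "integrable M (\<lambda>x. indicator A x *\<^sub>R f x)"
    using assms unfolding set_integrable_def .
  have eq: "(\<lambda>x. indicator A x *\<^sub>R Re (f x)) = (\<lambda>x. Re (indicator A x *\<^sub>R f x))"
    by auto
  show "set_integrable M A (\<lambda>x. Re (f x))"
    unfolding set_integrable_def eq using integrable_Re[OF f] .
  show "(LINT x:A|M. Re (f x)) = Re (LINT x:A|M. f x)"
    unfolding set_lebesgue_integral_def eq using integral_Re[OF f] .
qed

lemma set_integral_mono_set_nonneg:
  fixes f :: "'a \<Rightarrow> real"
  assumes "set_integrable M A f" "\<And>x. x \<in> A \<Longrightarrow> 0 \<le> f x" "B \<subseteq> A" "B \<in> sets M"
  shows "(LINT x:B|M. f x) \<le> (LINT x:A|M. f x)"
proof -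
  have "set_integrable M B f"
    using assms by (blast intro: set_integrable_subset)
  then show ?thesis
    using assms unfolding set_integrable_def set_lebesgue_integral_def
    by (intro integral_mono) (auto split: split_indicator)
qed

lemma set_integrable_mult_continuous_on:
  fixes f c :: "real \<Rightarrow> 'a::{real_normed_field, second_countable_topology, banach}"
  assumes f: "set_integrable lborel {a..b} f" and c: "continuous_on {a..b} c"
  shows "set_integrable lborel {a..b} (\<lambda>s. f s * c s)"
proof -
  obtain M where M: "\<And>x. x \<in> {a..b} \<Longrightarrow> norm (c x) \<le> M"
    using compact_imp_bounded[OF compact_continuous_image[OF c compact_Icc]]
    unfolding bounded_iff by (metis imageI)
  have "(\<lambda>x. indicator {a..b} x *\<^sub>R f x) \<in> borel_measurable lborel"
    using f unfolding set_integrable_def by (rule borel_measurable_integrable)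
  moreover have "(\<lambda>x. indicator {a..b} x *\<^sub>R c x) \<in> borel_measurable lborel"
    using borel_measurable_continuous_on_indicator[OF _ c] by simp
  ultimately have "(\<lambda>x. (indicator {a..b} x *\<^sub>R f x) * (indicator {a..b} x *\<^sub>R c x)) \<in> borel_measurable lborel"
    by (rule borel_measurable_times)
  then have "set_borel_measurable lborel {a..b} (\<lambda>s. f s * c s)"
    unfolding set_borel_measurable_def
    by (rule measurable_cong[THEN iffD1, rotated]) (auto split: split_indicator)
  moreover have "AE x in lborel. x \<in> {a..b} \<longrightarrow> norm (f x * c x) \<le> norm (of_real M * f x)"
  proof (intro AE_I2 impI)
    fix x assume "x \<in> {a..b}"
    then have "norm (f x) * norm (c x) \<le> norm (f x) * \<bar>M\<bar>"
      using M[of x] by (intro mult_left_mono) auto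
    then show "norm (f x * c x) \<le> norm (of_real M * f x)"
      by (simp add: norm_mult mult.commute)
  qed
  ultimately show ?thesis
    by (intro set_integrable_bound[OF set_integrable_mult_right[OF f]])
qed

lemma set_integrable_mult_cnj_if_square_integrable:
  fixes f g :: "real \<Rightarrow> complex"
  assumes "set_borel_measurable lborel A f" "set_borel_measurable lborel A g"
    and "set_integrable lborel A (\<lambda>x. (cmod (f x))\<^sup>2)" "set_integrable lborel A (\<lambda>x. (cmod (g x))\<^sup>2)"
  shows "set_integrable lborel A (\<lambda>x. f x * cnj (g x))"
proof (rule set_integrable_bound)
  show "set_integrable lborel A (\<lambda>x. ((cmod (f x))\<^sup>2 + (cmod (g x))\<^sup>2) / 2)"
    using assms(3,4) by auto
  have "cnj \<in> borel_measurable borel"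
    by (intro borel_measurable_continuous_onI continuous_on_cnj continuous_on_id)
  then have "(\<lambda>x. (indicator A x *\<^sub>R f x) * cnj (indicator A x *\<^sub>R g x)) \<in> borel_measurable lborel"
    using assms(1,2) unfolding set_borel_measurable_def
    by (intro borel_measurable_times measurable_compose[where f="\<lambda>x. indicator A x *\<^sub>R g x" and g=cnj])
  then show "set_borel_measurable lborel A (\<lambda>x. f x * cnj (g x))"
    unfolding set_borel_measurable_def
    by (rule measurable_cong[THEN iffD1, rotated]) (auto split: split_indicator)
  have "cmod (f x) * cmod (g x) \<le> ((cmod (f x))\<^sup>2 + (cmod (g x))\<^sup>2) / 2" for x
    using sum_squares_bound[of "cmod (f x)" "cmod (g x)"] by simp
  then show "AE x in lborel. x \<in> A \<longrightarrow> norm (f x * cnj (g x)) \<le> norm (((cmod (f x))\<^sup>2 + (cmod (g x))\<^sup>2) / 2)"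
    by (intro AE_I2) (simp add: norm_mult)
qed

lemma set_integral_Icc_swap:
  fixes f g :: "real \<Rightarrow> 'a::{real_normed_field, second_countable_topology, banach}"
  assumes f: "set_integrable lborel {a..b} f" and g: "set_integrable lborel {a..b} g"
  shows "(LINT s:{a..b}|lborel. f s * (LINT t:{a..s}|lborel. g t))
       = (LINT t:{a..b}|lborel. (LINT s:{t..b}|lborel. f s) * g t)"
proof -
  define F where "F s = indicator {a..b} s *\<^sub>R f s" for s
  define G where "G t = indicator {a..b} t *\<^sub>R g t" for t
  have Fi: "integrable lborel F" and Gi: "integrable lborel G"
    using f g unfolding F_def G_def set_integrable_def .
  then have [measurable]: "F \<in> borel_measurable lborel" "G \<in> borel_measurable lborel"
    by auto
  define H where "H s t = (if t \<le> s then F s * G t else 0)" for s t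
  have "integrable (lborel \<Otimes>\<^sub>M lborel) (\<lambda>(s, t). norm (F s) * norm (G t))"
    apply (rule lborel_pair.Fubini_integrable)
    subgoal by measurable
    subgoal using integrable_mult_right[OF integrable_norm[OF Fi], of "LBINT t. norm (G t)"]
      by (simp add: mult.commute)
    subgoal using integrable_norm[OF Gi] by simp
    done
  moreover have "(\<lambda>(s, t). H s t) \<in> borel_measurable (lborel \<Otimes>\<^sub>M lborel)"
    unfolding H_def by measurable
  ultimately have Hi: "integrable (lborel \<Otimes>\<^sub>M lborel) (\<lambda>(s, t). H s t)"
  proof (rule Bochner_Integration.integrable_bound)
    show "AE p in lborel \<Otimes>\<^sub>M lborel.
        norm (case p of (s, t) \<Rightarrow> H s t) \<le> norm (case p of (s, t) \<Rightarrow> norm (F s) * norm (G t))"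
      by (intro AE_I2) (simp add: H_def norm_mult split: prod.split)
  qed
  have inner_t: "(LBINT t. H s t) = indicator {a..b} s *\<^sub>R (f s * (LINT t:{a..s}|lborel. g t))" for s
  proof -
    have "(LBINT t. H s t) = (LBINT t. F s * (indicator {a..s} t *\<^sub>R g t))"
      by (intro Bochner_Integration.integral_cong) (auto simp: H_def F_def G_def split: split_indicator)
    also have "\<dots> = F s * (LINT t:{a..s}|lborel. g t)"
      unfolding set_lebesgue_integral_def by (rule integral_mult_right_zero)
    finally show ?thesis
      by (simp add: F_def)
  qed
  have inner_s: "(LBINT s. H s t) = indicator {a..b} t *\<^sub>R ((LINT s:{t..b}|lborel. f s) * g t)" for t
  proof -
    have "(LBINT s. H s t) = (LBINT s. (indicator {t..b} s *\<^sub>R f s) * G t)"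
      by (intro Bochner_Integration.integral_cong) (auto simp: H_def F_def G_def split: split_indicator)
    also have "\<dots> = (LINT s:{t..b}|lborel. f s) * G t"
      unfolding set_lebesgue_integral_def by (rule integral_mult_left_zero)
    finally show ?thesis
      by (simp add: G_def)
  qed
  show ?thesis
    using lborel_pair.Fubini_integral[OF Hi]
    unfolding set_lebesgue_integral_def inner_t inner_s by simp
qed

lemma set_integral_Icc_by_parts:
  fixes f F G g :: "real \<Rightarrow> complex"
  assumes ab: "a \<le> b"
    and f: "set_integrable lborel {a..b} f"
    and F: "\<And>x y. a \<le> x \<Longrightarrow> x \<le> y \<Longrightarrow> y \<le> b \<Longrightarrow> F y - F x = (LINT t:{x..y}|lborel. f t)"
    and F_cont: "continuous_on {a..b} F"
    and G: "\<And>x. a \<le> x \<Longrightarrow> x \<le> b \<Longrightarrow> (G has_vector_derivative g x) (at x)"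
    and g_cont: "continuous_on {a..b} g"
  shows "(LINT x:{a..b}|lborel. f x * G x) = F b * G b - F a * G a - (LINT x:{a..b}|lborel. F x * g x)"
proof -
  have G_cont: "continuous_on {a..b} G"
    using G by (auto intro!: continuous_at_imp_continuous_on has_vector_derivative_continuous)
  have G_FTC: "G s - G a = (LINT t:{a..s}|lborel. g t)" if "a \<le> s" "s \<le> b" for s
    using that by (intro set_integral_Icc_FTC[symmetric] continuous_on_subset[OF g_cont] G) auto
  have "(LINT x:{a..b}|lborel. f x * G x) - (LINT x:{a..b}|lborel. f x * G a)
      = (LINT x:{a..b}|lborel. f x * G x - f x * G a)"
    using set_integrable_mult_continuous_on[OF f G_cont] f
    by (intro set_integral_diff(2)[symmetric]) auto
  also have "\<dots> = (LINT x:{a..b}|lborel. f x * (LINT t:{a..x}|lborel. g t))"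
    using G_FTC by (intro set_lebesgue_integral_cong) (auto simp flip: right_diff_distrib)
  also have "\<dots> = (LINT t:{a..b}|lborel. (LINT x:{t..b}|lborel. f x) * g t)"
    by (rule set_integral_Icc_swap[OF f borel_integrable_atLeastAtMost'[OF g_cont]])
  also have "\<dots> = (LINT t:{a..b}|lborel. F b * g t - F t * g t)"
    using F ab by (intro set_lebesgue_integral_cong) (auto simp flip: left_diff_distrib)
  also have "\<dots> = F b * (LINT t:{a..b}|lborel. g t) - (LINT t:{a..b}|lborel. F t * g t)"
    using F_cont g_cont
    by (subst set_integral_diff(2)) (auto intro!: borel_integrable_atLeastAtMost' continuous_intros)
  finally have "(LINT x:{a..b}|lborel. f x * G x) - (F b - F a) * G a
      = F b * (G b - G a) - (LINT t:{a..b}|lborel. F t * g t)"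
    using F[of a b] G_FTC[of b] ab by simp
  then show ?thesis
    by (simp add: algebra_simps)
qed

lemma UN_Icc_inverse_Suc: "(\<Union>n. {1 / real (Suc n)..real (Suc n)}) = {0<..}"
proof (intro equalityI subsetI)
  fix x :: real assume "x \<in> {0<..}"
  then obtain n :: nat where "max x (1 / x) < n"
    using reals_Archimedean2 by blast
  with \<open>x \<in> {0<..}\<close> have "x \<in> {1 / real (Suc n)..real (Suc n)}"
    by (auto simp: field_simps)
  then show "x \<in> (\<Union>n. {1 / real (Suc n)..real (Suc n)})" by blast
qed (auto intro: less_le_trans[of 0 "1 / real (Suc _)"])

lemma mono_Icc_inverse_Suc: "mono (\<lambda>n. {1 / real (Suc n)..real (Suc n)})"
  by (intro monoI) (auto intro: order_trans[of _ "1 / real (Suc _)"] simp: frac_le)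

lemma set_integrable_Ioi_if_Icc_bounded:
  fixes f :: "real \<Rightarrow> real"
  assumes f: "continuous_on {0<..} f" "\<And>r. 0 < r \<Longrightarrow> 0 \<le> f r"
    and bound: "\<And>a b. 0 < a \<Longrightarrow> a \<le> b \<Longrightarrow> (LINT r:{a..b}|lborel. f r) \<le> M"
  shows "set_integrable lborel {0<..} f" "(LINT r:{0<..}|lborel. f r) \<le> M"
proof -
  define I where "I n = {1 / real (Suc n)..real (Suc n)}" for n
  have I_mono: "mono I" and I_sets: "I n \<in> sets lborel" and UN_I: "(\<Union>n. I n) = {0<..}" for n
    unfolding I_def using mono_Icc_inverse_Suc UN_Icc_inverse_Suc by auto
  have I_pos: "0 < 1 / real (Suc n)" "1 / real (Suc n) \<le> real (Suc n)" for n
    by (auto simp: field_simps)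
  have int: "set_integrable lborel (I n) f" for n
    unfolding I_def by (rule set_integrable_Icc_if_continuous_on_Ioi[OF f(1) I_pos(1)])
  have f_nonneg: "0 \<le> f x" if "x \<in> I n" for x n
    using that UN_I f(2) by blast
  have "incseq (\<lambda>n. LINT r:I n|lborel. f r)"
    using monoD[OF I_mono] int f_nonneg I_sets by (intro monoI set_integral_mono_set_nonneg) auto
  moreover have bounded: "\<forall>n. (LINT r:I n|lborel. f r) \<le> M"
    unfolding I_def using bound I_pos by blast
  ultimately obtain L where L: "(\<lambda>n. LINT r:I n|lborel. f r) \<longlonglongrightarrow> L"
    using incseq_convergent by blast
  show integrable: "set_integrable lborel {0<..} f"
    using pos_integrable_to_top[OF I_sets I_mono f_nonneg int L] unfolding UN_I .
  have "(\<lambda>n. LINT r:I n|lborel. f r) \<longlonglongrightarrow> (LINT r:{0<..}|lborel. f r)"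
    using set_integral_cont_up[OF I_sets I_mono] integrable unfolding UN_I .
  then show "(LINT r:{0<..}|lborel. f r) \<le> M"
    using bounded by (intro LIMSEQ_le_const2) auto
qed

lemma set_integral_Ioi_outside_Icc_small:
  fixes f :: "real \<Rightarrow> real"
  assumes f: "set_integrable lborel {0<..} f" and "0 < \<epsilon>"
  obtains c C where "0 < c"
    "\<And>S. S \<in> sets lborel \<Longrightarrow> S \<subseteq> {0<..} - {c..C} \<Longrightarrow> (LINT r:S|lborel. \<bar>f r\<bar>) < \<epsilon>"
proof -
  define A where "A n = {0<..} - {1 / real (Suc n)..real (Suc n)}" for n
  have abs_f: "set_integrable lborel {0<..} (\<lambda>r. \<bar>f r\<bar>)"
    using set_integrable_abs[OF f] .
  have "decseq A"
    using mono_Icc_inverse_Suc unfolding A_def mono_def decseq_def by blast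
  moreover have "(\<Inter>n. A n) = {}"
    using UN_Icc_inverse_Suc unfolding A_def by blast
  moreover have "set_integrable lborel (A 0) (\<lambda>r. \<bar>f r\<bar>)"
    using abs_f by (rule set_integrable_subset) (auto simp: A_def)
  moreover have "A n \<in> sets lborel" for n
    by (simp add: A_def)
  ultimately have "(\<lambda>n. LINT r:A n|lborel. \<bar>f r\<bar>) \<longlonglongrightarrow> 0"
    using set_integral_cont_down[of A lborel "\<lambda>r. \<bar>f r\<bar>"] by (simp add: set_lebesgue_integral_def)
  then have "\<forall>\<^sub>F n in sequentially. (LINT r:A n|lborel. \<bar>f r\<bar>) < \<epsilon>"
    using \<open>0 < \<epsilon>\<close> by (rule order_tendstoD(2))
  then obtain n where n: "(LINT r:A n|lborel. \<bar>f r\<bar>) < \<epsilon>"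
    by (meson eventually_sequentially order_refl)
  have "(LINT r:S|lborel. \<bar>f r\<bar>) < \<epsilon>" if "S \<in> sets lborel" "S \<subseteq> A n" for S
  proof -
    have "(LINT r:S|lborel. \<bar>f r\<bar>) \<le> (LINT r:A n|lborel. \<bar>f r\<bar>)"
      by (rule set_integral_mono_set_nonneg[OF set_integrable_subset[OF abs_f]]) (use that in \<open>auto simp: A_def\<close>)
    with n show ?thesis by linarith
  qed
  then show ?thesis
    using that[of "1 / real (Suc n)" "real (Suc n)"] by (simp add: A_def)
qed

lemma set_integral_Icc_approx_Ioi:
  fixes f :: "real \<Rightarrow> real"
  assumes f: "set_integrable lborel {0<..} f" and "0 < \<epsilon>"
  obtains c C where "0 < c"
    "\<And>a b. 0 < a \<Longrightarrow> a \<le> c \<Longrightarrow> C \<le> b \<Longrightarrow>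
       \<bar>(LINT r:{0<..}|lborel. f r) - (LINT r:{a..b}|lborel. f r)\<bar> < \<epsilon>"
proof -
  obtain c C where c: "0 < c" and outside:
    "\<And>S. S \<in> sets lborel \<Longrightarrow> S \<subseteq> {0<..} - {c..C} \<Longrightarrow> (LINT r:S|lborel. \<bar>f r\<bar>) < \<epsilon>"
    using set_integral_Ioi_outside_Icc_small[OF assms] by blast
  have "\<bar>(LINT r:{0<..}|lborel. f r) - (LINT r:{a..b}|lborel. f r)\<bar> < \<epsilon>"
    if "0 < a" "a \<le> c" "C \<le> b" for a b
  proof -
    have "(LINT r:{a..b} \<union> ({0<..} - {a..b})|lborel. f r)
        = (LINT r:{a..b}|lborel. f r) + (LINT r:{0<..} - {a..b}|lborel. f r)"
      using that by (intro set_integral_Un) (auto intro: set_integrable_subset[OF f])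
    moreover have "{a..b} \<union> ({0<..} - {a..b}) = {0<..}"
      using that by auto
    ultimately have "(LINT r:{0<..}|lborel. f r) - (LINT r:{a..b}|lborel. f r) = (LINT r:{0<..} - {a..b}|lborel. f r)"
      by simp
    also have "\<bar>\<dots>\<bar> \<le> (LINT r:{0<..} - {a..b}|lborel. \<bar>f r\<bar>)"
      using set_integral_norm_bound[of lborel "{0<..} - {a..b}" f] set_integrable_subset[OF f, of "{0<..} - {a..b}"]
      by simp
    also have "\<dots> < \<epsilon>"
      using that by (intro outside) auto
    finally show ?thesis .
  qed
  with c that show ?thesis by blast
qed

lemma set_integral_Icc_small_near_0:
  fixes f :: "real \<Rightarrow> real"
  assumes f: "set_integrable lborel {0<..} f" and "0 < \<epsilon>"
  obtains c where "0 < c" "\<And>a b. 0 < a \<Longrightarrow> b < c \<Longrightarrow> (LINT r:{a..b}|lborel. \<bar>f r\<bar>) < \<epsilon>"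
proof -
  obtain c C where c: "0 < c" and outside:
    "\<And>S. S \<in> sets lborel \<Longrightarrow> S \<subseteq> {0<..} - {c..C} \<Longrightarrow> (LINT r:S|lborel. \<bar>f r\<bar>) < \<epsilon>"
    using set_integral_Ioi_outside_Icc_small[OF assms] by blast
  have "(LINT r:{a..b}|lborel. \<bar>f r\<bar>) < \<epsilon>" if "0 < a" "b < c" for a b
    using that by (intro outside) auto
  with c that show ?thesis by blast
qed

lemma set_integrable_Ioi_if_abs_le:
  fixes f g :: "real \<Rightarrow> real"
  assumes g: "set_integrable lborel {0<..} g"
    and f: "continuous_on {0<..} f" "\<And>r. 0 < r \<Longrightarrow> \<bar>f r\<bar> \<le> g r"
  shows "set_integrable lborel {0<..} f"
proof (rule set_integrable_bound[OF g])
  show "set_borel_measurable lborel {0<..} f"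
    unfolding set_borel_measurable_def using borel_measurable_continuous_on_indicator[OF _ f(1)] by simp
  show "AE r in lborel. r \<in> {0<..} \<longrightarrow> norm (f r) \<le> norm (g r)"
    using f(2) by (intro AE_I2) (auto intro: order_trans[OF _ abs_ge_self])
qed

lemma not_set_integrable_Ioi_if_ge_inverse:
  fixes f :: "real \<Rightarrow> real"
  assumes nonneg: "\<And>r. 0 < r \<Longrightarrow> 0 \<le> f r" and "0 < c" "0 < d"
    and lower: "\<And>r. 0 < r \<Longrightarrow> r \<le> d \<Longrightarrow> c / r \<le> f r"
  shows "\<not> set_integrable lborel {0<..} f"
proof
  assume f: "set_integrable lborel {0<..} f"
  define M where "M = (LINT r:{0<..}|lborel. f r)"
  define e where "e = d * exp (- (max M 0 / c + 1))"
  have "0 \<le> max M 0 / c"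
    using \<open>0 < c\<close> by simp
  then have e: "0 < e" "e \<le> d"
    using \<open>0 < d\<close> by (auto simp: e_def mult_le_cancel_left1)
  have "(LINT r:{e..d}|lborel. c / r) = c * ln d - c * ln e"
    using e by (intro set_integral_Icc_FTC[where F="\<lambda>r. c * ln r"])
      (auto intro!: continuous_intros derivative_eq_intros
            simp: has_real_derivative_iff_has_vector_derivative[symmetric])
  also have "\<dots> = max M 0 + c"
    using \<open>0 < c\<close> \<open>0 < d\<close> by (simp add: e_def ln_mult algebra_simps)
  finally have "max M 0 + c = (LINT r:{e..d}|lborel. c / r)" ..
  also have "\<dots> \<le> (LINT r:{e..d}|lborel. f r)"
  proof (rule set_integral_mono)
    show "set_integrable lborel {e..d} (\<lambda>r. c / r)"
      using e by (intro borel_integrable_atLeastAtMost' continuous_intros) auto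
    show "set_integrable lborel {e..d} f"
      using e by (intro set_integrable_subset[OF f]) auto
  qed (use e lower in auto)
  also have "\<dots> \<le> M"
    unfolding M_def using e nonneg by (intro set_integral_mono_set_nonneg[OF f]) auto
  finally show False
    using \<open>0 < c\<close> by linarith
qed

lemma not_set_integrable_Ioi_if_ge_const_at_top:
  fixes f :: "real \<Rightarrow> real"
  assumes nonneg: "\<And>r. 0 < r \<Longrightarrow> 0 \<le> f r" and "0 < c" "0 < T"
    and lower: "\<And>r. T \<le> r \<Longrightarrow> c \<le> f r"
  shows "\<not> set_integrable lborel {0<..} f"
proof
  assume f: "set_integrable lborel {0<..} f"
  define M where "M = (LINT r:{0<..}|lborel. f r)"
  define X where "X = T + max M 0 / c + 1"
  have "T \<le> X"
    using \<open>0 < c\<close> by (simp add: X_def)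
  have "max M 0 + c = (X - T) * c"
    using \<open>0 < c\<close> by (simp add: X_def field_simps)
  also have "\<dots> = (LINT r:{T..X}|lborel. c)"
    using \<open>T \<le> X\<close> by (simp add: set_integral_const)
  also have "\<dots> \<le> (LINT r:{T..X}|lborel. f r)"
  proof (rule set_integral_mono)
    show "set_integrable lborel {T..X} f"
      using \<open>0 < T\<close> by (intro set_integrable_subset[OF f]) auto
    show "set_integrable lborel {T..X} (\<lambda>r. c)"
      by (intro borel_integrable_atLeastAtMost' continuous_intros)
  qed (use lower in auto)
  also have "\<dots> \<le> M"
    unfolding M_def using \<open>0 < T\<close> nonneg by (intro set_integral_mono_set_nonneg[OF f]) auto
  finally show False
    using \<open>0 < c\<close> by linarith
qed

lemma not_set_integrable_Ioi_if_ge_linear: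
  fixes f :: "real \<Rightarrow> real"
  assumes nonneg: "\<And>r. 0 < r \<Longrightarrow> 0 \<le> f r" and "0 < c" "0 < R"
    and lower: "\<And>r. R \<le> r \<Longrightarrow> c * (r - R) - M \<le> f r"
  shows "\<not> set_integrable lborel {0<..} f"
proof (rule not_set_integrable_Ioi_if_ge_const_at_top[OF nonneg \<open>0 < c\<close>])
  have "0 \<le> (max M 0 + c) / c"
    using \<open>0 < c\<close> by simp
  then show "0 < R + (max M 0 + c) / c"
    using \<open>0 < R\<close> by linarith
  fix r assume r: "R + (max M 0 + c) / c \<le> r"
  then have "max M 0 + c \<le> c * (r - R)"
    using \<open>0 < c\<close> by (simp add: field_simps)
  moreover have "R \<le> r"
    using r \<open>0 \<le> (max M 0 + c) / c\<close> by linarith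
  ultimately show "c \<le> f r"
    using lower[of r] by linarith
qed

lemma ex_near_0_deriv_half_plus_div_gt:
  fixes \<rho> \<rho>' :: "real \<Rightarrow> real"
  assumes \<rho>: "set_integrable lborel {0<..} \<rho>" "\<And>r. 0 < r \<Longrightarrow> 0 \<le> \<rho> r"
    and deriv: "\<And>r. 0 < r \<Longrightarrow> (\<rho> has_real_derivative \<rho>' r) (at r)"
    and "0 < \<delta>" "0 < a\<^sub>0"
  shows "\<exists>a. 0 < a \<and> a < a\<^sub>0 \<and> - \<delta> < \<rho>' a / 2 + \<rho> a / (2 * a)"
proof (rule ccontr)
  assume "\<not> ?thesis"
  then have bad: "\<rho>' a / 2 + \<rho> a / (2 * a) \<le> - \<delta>" if "0 < a" "a < a\<^sub>0" for a
    using that by force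
  define s where "s = a\<^sub>0 / 2"
  have s: "0 < s" "s < a\<^sub>0"
    using \<open>0 < a\<^sub>0\<close> by (auto simp: s_def)
  \<comment> \<open>On \<open>(0, a\<^sub>0)\<close> the function \<open>r \<rho>(r) + \<delta> r\<^sup>2\<close> is nonincreasing, so \<open>\<rho>\<close> grows like \<open>1/r\<close> at \<open>0\<close>.\<close>
  have decreasing: "s * \<rho> s + \<delta> * s\<^sup>2 \<le> r * \<rho> r + \<delta> * r\<^sup>2" if "0 < r" "r \<le> s" for r
  proof (rule DERIV_nonpos_imp_nonincreasing[OF \<open>r \<le> s\<close>])
    fix x assume x: "r \<le> x" "x \<le> s"
    then have "0 < x" "x < a\<^sub>0"
      using that s by auto
    then have "\<rho> x + x * \<rho>' x + \<delta> * (2 * x) \<le> 0"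
      using bad[of x] by (simp add: field_simps)
    moreover have "((\<lambda>r. r * \<rho> r + \<delta> * r\<^sup>2) has_real_derivative \<rho> x + x * \<rho>' x + \<delta> * (2 * x)) (at x)"
      using deriv[OF \<open>0 < x\<close>] by (auto intro!: derivative_eq_intros)
    ultimately show "\<exists>y. ((\<lambda>r. r * \<rho> r + \<delta> * r\<^sup>2) has_real_derivative y) (at x) \<and> y \<le> 0"
      by blast
  qed
  have "3/4 * \<delta> * s\<^sup>2 / r \<le> \<rho> r" if "0 < r" "r \<le> s / 2" for r
  proof -
    have "\<delta> * r\<^sup>2 \<le> \<delta> * (s / 2)\<^sup>2"
      using that \<open>0 < \<delta>\<close> by (intro mult_left_mono power_mono) auto
    moreover have "0 \<le> s * \<rho> s"
      using \<rho>(2)[of s] s by simp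
    ultimately have "3/4 * \<delta> * s\<^sup>2 \<le> r * \<rho> r"
      using decreasing[of r] that by (simp add: power_divide)
    then show ?thesis
      using that by (simp add: divide_le_eq mult_ac)
  qed
  then show False
    using not_set_integrable_Ioi_if_ge_inverse[OF \<rho>(2), where c="3/4 * \<delta> * s\<^sup>2" and d="s / 2"] \<rho>(1) s \<open>0 < \<delta>\<close>
    by auto
qed

lemma ex_near_top_deriv_half_plus_div_lt:
  fixes \<rho> \<rho>' :: "real \<Rightarrow> real"
  assumes \<rho>: "set_integrable lborel {0<..} \<rho>" "\<And>r. 0 < r \<Longrightarrow> 0 \<le> \<rho> r"
    and deriv: "\<And>r. 0 < r \<Longrightarrow> (\<rho> has_real_derivative \<rho>' r) (at r)"
    and "0 < \<delta>"
  shows "\<exists>b. b\<^sub>0 < b \<and> \<rho>' b / 2 + \<rho> b / (2 * b) < \<delta>"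
proof (rule ccontr)
  assume "\<not> ?thesis"
  then have bad: "\<delta> \<le> \<rho>' b / 2 + \<rho> b / (2 * b)" if "b\<^sub>0 < b" for b
    using that by force
  define R where "R = max b\<^sub>0 0 + 1"
  have R: "0 < R" "b\<^sub>0 < R"
    by (auto simp: R_def)
  \<comment> \<open>Beyond \<open>b\<^sub>0\<close> the function \<open>r \<rho>(r) - \<delta> r\<^sup>2\<close> is nondecreasing, so \<open>\<rho>\<close> grows linearly.\<close>
  have increasing: "R * \<rho> R - \<delta> * R\<^sup>2 \<le> r * \<rho> r - \<delta> * r\<^sup>2" if "R \<le> r" for r
  proof (rule DERIV_nonneg_imp_nondecreasing[OF \<open>R \<le> r\<close>])
    fix x assume x: "R \<le> x" "x \<le> r"
    then have "0 < x" "b\<^sub>0 < x"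
      using R by auto
    then have "0 \<le> \<rho> x + x * \<rho>' x - \<delta> * (2 * x)"
      using bad[of x] by (simp add: field_simps)
    moreover have "((\<lambda>r. r * \<rho> r - \<delta> * r\<^sup>2) has_real_derivative \<rho> x + x * \<rho>' x - \<delta> * (2 * x)) (at x)"
      using deriv[OF \<open>0 < x\<close>] by (auto intro!: derivative_eq_intros)
    ultimately show "\<exists>y. ((\<lambda>r. r * \<rho> r - \<delta> * r\<^sup>2) has_real_derivative y) (at x) \<and> 0 \<le> y"
      by blast
  qed
  have "\<delta> * (r - R) - 0 \<le> \<rho> r" if "R \<le> r" for r
  proof -
    have "\<delta> * (r - R) * r \<le> \<delta> * (r - R) * (r + R)"
      using that R \<open>0 < \<delta>\<close> by (intro mult_left_mono) auto
    also have "\<dots> \<le> r * \<rho> r"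
    proof -
      have "0 \<le> R * \<rho> R"
        using \<rho>(2)[of R] R by simp
      then show ?thesis
        using increasing[OF that] by (simp add: power2_eq_square algebra_simps)
    qed
    finally have "r * (\<delta> * (r - R)) \<le> r * \<rho> r"
      by (simp add: mult_ac)
    moreover have "0 < r"
      using that R by linarith
    ultimately show ?thesis
      by simp
  qed
  from not_set_integrable_Ioi_if_ge_linear[OF \<rho>(2) \<open>0 < \<delta>\<close> R(1) this] \<rho>(1)
  show False ..
qed

lemma ex_near_top_deriv_half_plus_mult_lt:
  fixes \<rho> \<rho>' g :: "real \<Rightarrow> real"
  assumes \<rho>: "set_integrable lborel {0<..} \<rho>" "\<And>r. 0 < r \<Longrightarrow> 0 \<le> \<rho> r"
    and r\<rho>: "set_integrable lborel {0<..} (\<lambda>r. r * \<rho> r)"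
    and deriv: "\<And>r. 0 < r \<Longrightarrow> (\<rho> has_real_derivative \<rho>' r) (at r)"
    and cont: "continuous_on {0<..} \<rho>'"
    and g: "\<And>r. 0 < r \<Longrightarrow> g r \<le> r"
    and "0 < \<delta>"
  shows "\<exists>b. b\<^sub>0 < b \<and> \<rho>' b / 2 + g b * \<rho> b < \<delta>"
proof (rule ccontr)
  assume "\<not> ?thesis"
  then have bad: "\<delta> \<le> \<rho>' b / 2 + g b * \<rho> b" if "b\<^sub>0 < b" for b
    using that by force
  define R where "R = max b\<^sub>0 0 + 1"
  have R: "0 < R" "b\<^sub>0 < R"
    by (auto simp: R_def)
  have \<rho>_cont: "continuous_on {0<..} \<rho>"
    using deriv by (auto intro!: continuous_at_imp_continuous_on DERIV_isCont)
  \<comment> \<open>Beyond \<open>b\<^sub>0\<close> we have \<open>\<rho>' \<ge> 2\<delta> - 2 r \<rho>\<close>, and \<open>r \<rho>\<close> is integrable, so \<open>\<rho>\<close> grows linearly.\<close>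
  have lower: "2 * \<delta> * (X - R) - 2 * (LINT r:{0<..}|lborel. r * \<rho> r) \<le> \<rho> X" if "R \<le> X" for X
  proof -
    have "2 * \<delta> * (X - R) - 2 * (LINT r:{R..X}|lborel. r * \<rho> r)
        = (LINT r:{R..X}|lborel. 2 * \<delta> - 2 * (r * \<rho> r))"
      using that R \<rho>_cont by (subst set_integral_diff(2))
        (auto simp: set_integral_const intro!: set_integrable_Icc_if_continuous_on_Ioi continuous_intros)
    also have "\<dots> \<le> (LINT r:{R..X}|lborel. \<rho>' r)"
    proof (rule set_integral_mono)
      show "set_integrable lborel {R..X} (\<lambda>r. 2 * \<delta> - 2 * (r * \<rho> r))"
        using \<rho>_cont R by (intro set_integrable_Icc_if_continuous_on_Ioi) (auto intro!: continuous_intros)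
      show "set_integrable lborel {R..X} \<rho>'"
        by (rule set_integrable_Icc_if_continuous_on_Ioi[OF cont R(1)])
      fix r assume "r \<in> {R..X}"
      then have "0 < r" "b\<^sub>0 < r"
        using R by auto
      then have "g r * \<rho> r \<le> r * \<rho> r"
        using g \<rho>(2) by (intro mult_right_mono) auto
      then show "2 * \<delta> - 2 * (r * \<rho> r) \<le> \<rho>' r"
        using bad[OF \<open>b\<^sub>0 < r\<close>] by linarith
    qed
    also have "\<dots> = \<rho> X - \<rho> R"
      using that R deriv
      by (intro set_integral_Icc_FTC[where F=\<rho>] continuous_on_subset[OF cont])
        (auto simp: has_real_derivative_iff_has_vector_derivative[symmetric])
    finally have "2 * \<delta> * (X - R) - 2 * (LINT r:{R..X}|lborel. r * \<rho> r) \<le> \<rho> X - \<rho> R" .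
    moreover have "(LINT r:{R..X}|lborel. r * \<rho> r) \<le> (LINT r:{0<..}|lborel. r * \<rho> r)"
      using R \<rho>(2) by (intro set_integral_mono_set_nonneg[OF r\<rho>]) auto
    ultimately show ?thesis
      using \<rho>(2)[of R] R by linarith
  qed
  from not_set_integrable_Ioi_if_ge_linear[OF \<rho>(2) _ R(1) lower] \<rho>(1) \<open>0 < \<delta>\<close>
  show False
    by simp
qed

section \<open>Integration by parts with a multiplier for \<open>H\<^sup>2\<^sub>l\<^sub>o\<^sub>c\<close> functions\<close>

locale H2loc_function =
  fixes w w1 w2 :: "real \<Rightarrow> complex"
  assumes H2loc: "H2loc w w1 w2"
begin

lemma w_has_vector_derivative: "0 < r \<Longrightarrow> (w has_vector_derivative w1 r) (at r)"
  using H2loc unfolding H2loc_def by auto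

lemma set_integrable_w2: "0 < a \<Longrightarrow> a \<le> b \<Longrightarrow> set_integrable lborel {a..b} w2"
  using H2loc unfolding H2loc_def by auto

lemma w1_diff_eq_integral: "0 < a \<Longrightarrow> a \<le> b \<Longrightarrow> w1 b - w1 a = (LINT r:{a..b}|lborel. w2 r)"
  using H2loc unfolding H2loc_def by auto

lemma continuous_on_w: "continuous_on {0<..} w"
  using w_has_vector_derivative
  by (auto intro!: continuous_at_imp_continuous_on has_vector_derivative_continuous)

lemma continuous_on_w1: "continuous_on {0<..} w1"
proof (intro continuous_at_imp_continuous_on ballI)
  fix r :: real assume "r \<in> {0<..}"
  then have r: "0 < r" by simp
  have w2: "w2 integrable_on {r/2..2*r}"
    using set_integrable_w2[of "r/2" "2*r"] r by (auto dest: set_borel_integral_eq_integral(1))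
  have "continuous_on {r/2..2*r} (\<lambda>x. w1 (r/2) + integral {r/2..x} w2)"
    using indefinite_integral_continuous_1[OF w2] by (intro continuous_intros)
  then have "continuous_on {r/2..2*r} w1"
  proof (rule continuous_on_eq)
    fix x assume "x \<in> {r/2..2*r}"
    then show "w1 (r/2) + integral {r/2..x} w2 = w1 x"
      using r w1_diff_eq_integral[of "r/2" x] set_integrable_w2[of "r/2" x]
      by (auto simp: set_borel_integral_eq_integral(2) algebra_simps)
  qed
  moreover have "r \<in> interior {r/2..2*r}"
    using r by auto
  ultimately show "isCont w1 r"
    by (rule continuous_on_interior)
qed

definition \<rho> :: "real \<Rightarrow> real" where "\<rho> r = (cmod (w r))\<^sup>2"

definition \<rho>' :: "real \<Rightarrow> real" where "\<rho>' r = 2 * Re (w1 r * cnj (w r))"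

lemma \<rho>_nonneg: "0 \<le> \<rho> r"
  by (simp add: \<rho>_def)

lemma \<rho>_has_real_derivative: "0 < r \<Longrightarrow> (\<rho> has_real_derivative \<rho>' r) (at r)"
proof -
  assume "0 < r"
  have "((\<lambda>x. w x * cnj (w x)) has_vector_derivative w r * cnj (w1 r) + w1 r * cnj (w r)) (at r)"
    using w_has_vector_derivative[OF \<open>0 < r\<close>] by (intro has_vector_derivative_mult has_vector_derivative_cnj)
  from bounded_linear.has_vector_derivative[OF bounded_linear_Re this]
  have "((\<lambda>x. Re (w x * cnj (w x))) has_vector_derivative Re (w r * cnj (w1 r) + w1 r * cnj (w r))) (at r)" .
  moreover have "(\<lambda>x. Re (w x * cnj (w x))) = \<rho>"
    unfolding \<rho>_def by (auto simp: fun_eq_iff complex_norm_square[symmetric])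
  moreover have "Re (w r * cnj (w1 r) + w1 r * cnj (w r)) = \<rho>' r"
    unfolding \<rho>'_def by (simp add: algebra_simps)
  ultimately show ?thesis
    by (simp add: has_real_derivative_iff_has_vector_derivative)
qed

lemma continuous_on_\<rho>: "continuous_on {0<..} \<rho>"
  unfolding \<rho>_def by (intro continuous_intros continuous_on_w)

lemma continuous_on_\<rho>': "continuous_on {0<..} \<rho>'"
  unfolding \<rho>'_def by (intro continuous_intros continuous_on_w continuous_on_w1)

lemma integral_Re_w2_mult_cnj_w:
  assumes "0 < a" "a \<le> b"
  shows "(LINT r:{a..b}|lborel. Re (w2 r * cnj (w r)))
       = \<rho>' b / 2 - \<rho>' a / 2 - (LINT r:{a..b}|lborel. (cmod (w1 r))\<^sup>2)"
proof -
  have w: "continuous_on {a..b} w" and w1: "continuous_on {a..b} w1"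
    using assms by (auto intro!: continuous_on_subset[OF continuous_on_w] continuous_on_subset[OF continuous_on_w1])
  have by_parts: "(LINT r:{a..b}|lborel. w2 r * cnj (w r))
      = w1 b * cnj (w b) - w1 a * cnj (w a) - (LINT r:{a..b}|lborel. w1 r * cnj (w1 r))"
  proof (rule set_integral_Icc_by_parts)
    show "set_integrable lborel {a..b} w2"
      using assms by (rule set_integrable_w2)
    show "w1 y - w1 x = (LINT t:{x..y}|lborel. w2 t)" if "a \<le> x" "x \<le> y" "y \<le> b" for x y
      using that assms by (intro w1_diff_eq_integral) auto
    show "((\<lambda>r. cnj (w r)) has_vector_derivative cnj (w1 x)) (at x)" if "a \<le> x" "x \<le> b" for x
      using that assms by (intro has_vector_derivative_cnj w_has_vector_derivative) auto
    show "continuous_on {a..b} (\<lambda>r. cnj (w1 r))"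
      using w1 by (intro continuous_intros)
  qed (use assms w1 in auto)
  have "set_integrable lborel {a..b} (\<lambda>r. w2 r * cnj (w r))"
    using assms w by (intro set_integrable_mult_continuous_on set_integrable_w2 continuous_intros)
  then have "(LINT r:{a..b}|lborel. Re (w2 r * cnj (w r))) = Re (LINT r:{a..b}|lborel. w2 r * cnj (w r))"
    by (rule set_integral_Re(2))
  also have "\<dots> = Re (w1 b * cnj (w b)) - Re (w1 a * cnj (w a)) - Re (LINT r:{a..b}|lborel. w1 r * cnj (w1 r))"
    unfolding by_parts by simp
  also have "Re (LINT r:{a..b}|lborel. w1 r * cnj (w1 r)) = (LINT r:{a..b}|lborel. (cmod (w1 r))\<^sup>2)"
  proof -
    have "set_integrable lborel {a..b} (\<lambda>r. w1 r * cnj (w1 r))"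
      using w1 by (intro borel_integrable_atLeastAtMost' continuous_intros)
    from set_integral_Re(2)[OF this] show ?thesis
      by (simp only: complex_norm_square[symmetric] Re_complex_of_real)
  qed
  finally show ?thesis
    by (simp add: \<rho>'_def field_simps)
qed

lemma integral_Icc_mult_\<rho>_deriv:
  fixes g g' :: "real \<Rightarrow> real"
  assumes g: "\<And>r. 0 < r \<Longrightarrow> (g has_real_derivative g' r) (at r)" "continuous_on {0<..} g'"
    and ab: "0 < a" "a \<le> b"
  shows "(LINT r:{a..b}|lborel. g r * \<rho>' r + g' r * \<rho> r) = g b * \<rho> b - g a * \<rho> a"
proof (rule set_integral_Icc_FTC[where F="\<lambda>r. g r * \<rho> r"])
  have "continuous_on {0<..} g"
    using g(1) by (auto intro!: continuous_at_imp_continuous_on DERIV_isCont)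
  then have "continuous_on {0<..} (\<lambda>r. g r * \<rho>' r + g' r * \<rho> r)"
    by (intro continuous_intros g(2) continuous_on_\<rho> continuous_on_\<rho>')
  then show "continuous_on {a..b} (\<lambda>r. g r * \<rho>' r + g' r * \<rho> r)"
    by (rule continuous_on_subset) (use ab in auto)
  fix x assume "a \<le> x" "x \<le> b"
  then have "0 < x" using ab by simp
  show "((\<lambda>r. g r * \<rho> r) has_vector_derivative g x * \<rho>' x + g' x * \<rho> x) (at x)"
    using DERIV_mult[OF g(1) \<rho>_has_real_derivative, OF \<open>0 < x\<close> \<open>0 < x\<close>]
    by (simp add: has_real_derivative_iff_has_vector_derivative[symmetric] algebra_simps)
qed (rule ab(2))

lemma integral_multiplier_identity:
  fixes V g g' :: "real \<Rightarrow> real"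
  assumes V: "continuous_on {0<..} V"
    and g: "\<And>r. 0 < r \<Longrightarrow> (g has_real_derivative g' r) (at r)" "continuous_on {0<..} g'"
    and ab: "0 < a" "a \<le> b"
  shows "(LINT r:{a..b}|lborel. - Re (w2 r * cnj (w r)) + V r * \<rho> r)
       = (\<rho>' a / 2 + g a * \<rho> a) - (\<rho>' b / 2 + g b * \<rho> b)
         + (LINT r:{a..b}|lborel. (cmod (w1 r))\<^sup>2 + g r * \<rho>' r + (V r + g' r) * \<rho> r)"
proof -
  have g_cont: "continuous_on {0<..} g"
    using g(1) by (auto intro!: continuous_at_imp_continuous_on DERIV_isCont)
  have int: "set_integrable lborel {a..b} f" if "continuous_on {0<..} f" for f :: "real \<Rightarrow> real"
    using that ab(1) by (rule set_integrable_Icc_if_continuous_on_Ioi)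
  have int_Re: "set_integrable lborel {a..b} (\<lambda>r. Re (w2 r * cnj (w r)))"
    using ab by (intro set_integral_Re(1) set_integrable_mult_continuous_on set_integrable_w2 continuous_intros
      continuous_on_subset[OF continuous_on_w]) auto
  have int_w1: "set_integrable lborel {a..b} (\<lambda>r. (cmod (w1 r))\<^sup>2)"
    by (intro int continuous_intros continuous_on_w1)
  have int_V: "set_integrable lborel {a..b} (\<lambda>r. V r * \<rho> r)"
    by (intro int continuous_intros V continuous_on_\<rho>)
  have int_g: "set_integrable lborel {a..b} (\<lambda>r. g r * \<rho>' r + g' r * \<rho> r)"
    by (intro int continuous_intros g(2) g_cont continuous_on_\<rho> continuous_on_\<rho>')
  have "(LINT r:{a..b}|lborel. (cmod (w1 r))\<^sup>2 + g r * \<rho>' r + (V r + g' r) * \<rho> r)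
      = (LINT r:{a..b}|lborel. ((cmod (w1 r))\<^sup>2 + V r * \<rho> r) + (g r * \<rho>' r + g' r * \<rho> r))"
    by (simp add: algebra_simps)
  also have "\<dots> = (LINT r:{a..b}|lborel. (cmod (w1 r))\<^sup>2) + (LINT r:{a..b}|lborel. V r * \<rho> r)
      + (g b * \<rho> b - g a * \<rho> a)"
    using int_w1 int_V int_g integral_Icc_mult_\<rho>_deriv[OF g ab] by (simp add: set_integral_add)
  moreover have "(LINT r:{a..b}|lborel. - Re (w2 r * cnj (w r)) + V r * \<rho> r)
      = - (LINT r:{a..b}|lborel. Re (w2 r * cnj (w r))) + (LINT r:{a..b}|lborel. V r * \<rho> r)"
  proof -
    have "(LINT r:{a..b}|lborel. - Re (w2 r * cnj (w r)) + V r * \<rho> r)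
        = (LINT r:{a..b}|lborel. V r * \<rho> r - Re (w2 r * cnj (w r)))"
      by (intro set_lebesgue_integral_cong) auto
    also have "\<dots> = (LINT r:{a..b}|lborel. V r * \<rho> r) - (LINT r:{a..b}|lborel. Re (w2 r * cnj (w r)))"
      by (rule set_integral_diff(2)[OF int_V int_Re])
    finally show ?thesis
      by linarith
  qed
  ultimately show ?thesis
    using integral_Re_w2_mult_cnj_w[OF ab] by (simp add: algebra_simps)
qed

end

section \<open>The coercivity estimate\<close>

locale Dk_function =
  fixes k :: int and \<beta> :: real and w w1 w2 :: "real \<Rightarrow> complex"
  assumes Dk: "Dk k \<beta> w w1 w2" and one_le_abs_k: "1 \<le> \<bar>k\<bar>"

sublocale Dk_function \<subseteq> H2loc_function w w1 w2
  using Dk by unfold_locales (simp add: Dk_def)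

context Dk_function
begin

lemma one_le_k_sq: "1 \<le> (real_of_int k)\<^sup>2"
  using one_le_power[of "\<bar>real_of_int k\<bar>" 2] one_le_abs_k by simp

lemma continuous_on_pot: "continuous_on {0<..} (pot k)"
  unfolding pot_def by (intro continuous_intros) auto

lemma set_integrable_\<rho>: "set_integrable lborel {0<..} \<rho>"
  using Dk unfolding Dk_def L2pos_def \<rho>_def by auto

definition quad_density :: "real \<Rightarrow> real" where
  "quad_density r = - Re (w2 r * cnj (w r)) + pot k r * \<rho> r"

lemma Re_Fop_mult_cnj: "Re (Fop k \<beta> lam w w2 r * cnj (w r)) = quad_density r"
proof -
  have "Fop k \<beta> lam w w2 r * cnj (w r) = - (w2 r * cnj (w r)) + of_real (pot k r) * (w r * cnj (w r))
      + \<i> * (of_real \<beta> * of_real (1 / r\<^sup>2 - lam) * (w r * cnj (w r)))"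
    unfolding Fop_def by (simp add: algebra_simps)
  also have "\<dots> = - (w2 r * cnj (w r)) + of_real (pot k r * \<rho> r) + \<i> * of_real (\<beta> * (1 / r\<^sup>2 - lam) * \<rho> r)"
    unfolding \<rho>_def complex_norm_square[symmetric] by simp
  finally show ?thesis
    unfolding quad_density_def by simp
qed

lemma set_integrable_Fop_mult_cnj: "set_integrable lborel {0<..} (\<lambda>r. Fop k \<beta> lam w w2 r * cnj (w r))"
proof -
  have "set_integrable lborel {0<..} (\<lambda>r. Lop k \<beta> w w2 r * cnj (w r))"
    using Dk unfolding Dk_def L2pos_def by (intro set_integrable_mult_cnj_if_square_integrable) auto
  moreover have "set_integrable lborel {0<..} (\<lambda>r. complex_of_real (\<rho> r))"
  proof -
    have "complex_integrable lborel (\<lambda>x. complex_of_real (indicator {0<..} x *\<^sub>R \<rho> x))"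
      using set_integrable_\<rho> unfolding set_integrable_def by (simp only: complex_of_real_integrable_eq)
    then show ?thesis
      unfolding set_integrable_def by (simp add: scaleR_conv_of_real)
  qed
  then have "set_integrable lborel {0<..} (\<lambda>r. (\<i> * of_real \<beta> * of_real lam) * complex_of_real (\<rho> r))"
    by (rule set_integrable_mult_right)
  ultimately have "set_integrable lborel {0<..}
      (\<lambda>r. Lop k \<beta> w w2 r * cnj (w r) - (\<i> * of_real \<beta> * of_real lam) * complex_of_real (\<rho> r))"
    by (rule set_integral_diff(1))
  moreover have "Lop k \<beta> w w2 r * cnj (w r) - (\<i> * of_real \<beta> * of_real lam) * complex_of_real (\<rho> r)
      = Fop k \<beta> lam w w2 r * cnj (w r)" for r
    unfolding Fop_def Lop_def \<rho>_def complex_norm_square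
    by (cases "r = 0") (simp_all add: field_simps)
  ultimately show ?thesis
    by simp
qed

lemma set_integrable_quad_density: "set_integrable lborel {0<..} quad_density"
  using set_integral_Re(1)[OF set_integrable_Fop_mult_cnj[of 0]] unfolding Re_Fop_mult_cnj .

lemma Re_ip_Fop: "Re (ip (Fop k \<beta> lam w w2) w) = (LINT r:{0<..}|lborel. quad_density r)"
  unfolding ip_def using set_integral_Re(2)[OF set_integrable_Fop_mult_cnj[of lam]]
  unfolding Re_Fop_mult_cnj by simp

definition energy_density :: "(real \<Rightarrow> real) \<Rightarrow> (real \<Rightarrow> real) \<Rightarrow> real \<Rightarrow> real" where
  "energy_density g g' r = (cmod (w1 r))\<^sup>2 + g r * \<rho>' r + (pot k r + g' r) * \<rho> r"

definition boundary_term :: "(real \<Rightarrow> real) \<Rightarrow> real \<Rightarrow> real" where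
  "boundary_term g r = \<rho>' r / 2 + g r * \<rho> r"

lemma integral_quad_density_Icc:
  assumes "\<And>r. 0 < r \<Longrightarrow> (g has_real_derivative g' r) (at r)" "continuous_on {0<..} g'" "0 < a" "a \<le> b"
  shows "(LINT r:{a..b}|lborel. quad_density r)
       = boundary_term g a - boundary_term g b + (LINT r:{a..b}|lborel. energy_density g g' r)"
  using integral_multiplier_identity[OF continuous_on_pot assms]
  unfolding quad_density_def energy_density_def boundary_term_def .

lemma continuous_on_energy_density:
  "continuous_on {0<..} g \<Longrightarrow> continuous_on {0<..} g' \<Longrightarrow> continuous_on {0<..} (energy_density g g')"
  unfolding energy_density_def
  by (intro continuous_intros continuous_on_w1 continuous_on_\<rho> continuous_on_\<rho>' continuous_on_pot)

lemma integral_Icc_le_by_multiplier: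
  fixes f e g g' :: "real \<Rightarrow> real"
  assumes g: "\<And>r. 0 < r \<Longrightarrow> (g has_real_derivative g' r) (at r)" "continuous_on {0<..} g" "continuous_on {0<..} g'"
    and f: "continuous_on {0<..} f" "\<And>r. 0 < r \<Longrightarrow> 0 \<le> f r"
    and e: "continuous_on {0<..} e"
    and f_le: "\<And>r. 0 < r \<Longrightarrow> f r \<le> energy_density g g' r + e r"
    and ab: "0 < a" "a \<le> a'" "a' \<le> b'" "b' \<le> b"
  shows "(LINT r:{a'..b'}|lborel. f r)
       \<le> (LINT r:{a..b}|lborel. quad_density r) - boundary_term g a + boundary_term g b
         + (LINT r:{a..b}|lborel. e r)"
proof -
  have int: "set_integrable lborel {a..b} h" if "continuous_on {0<..} h" for h :: "real \<Rightarrow> real"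
    using that ab(1) by (rule set_integrable_Icc_if_continuous_on_Ioi)
  have energy_int: "set_integrable lborel {a..b} (energy_density g g')"
    by (intro int continuous_on_energy_density g(2,3))
  have "(LINT r:{a'..b'}|lborel. f r) \<le> (LINT r:{a..b}|lborel. f r)"
    using ab f(2) by (intro set_integral_mono_set_nonneg int f(1)) auto
  also have "\<dots> \<le> (LINT r:{a..b}|lborel. energy_density g g' r + e r)"
    using ab f_le by (intro set_integral_mono int f(1) set_integral_add(1) energy_int e) auto
  also have "\<dots> = (LINT r:{a..b}|lborel. energy_density g g' r) + (LINT r:{a..b}|lborel. e r)"
    by (intro set_integral_add(2) energy_int int e)
  finally show ?thesis
    using integral_quad_density_Icc[OF g(1,3) ab(1)] ab by simp
qed

definition hardy_sq :: "real \<Rightarrow> real" where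
  "hardy_sq r = (cmod (w1 r + w r / complex_of_real (2 * r)))\<^sup>2"

lemma hardy_sq_nonneg: "0 \<le> hardy_sq r"
  by (simp add: hardy_sq_def)

lemma continuous_on_hardy_sq: "continuous_on {0<..} hardy_sq"
  unfolding hardy_sq_def by (intro continuous_intros continuous_on_w continuous_on_w1) auto

lemma hardy_sq_plus_le_energy_density:
  assumes "0 < r"
  shows "hardy_sq r + r\<^sup>2 * \<rho> r / 16
    \<le> energy_density (\<lambda>r. 1 / (2 * r)) (\<lambda>r. - 1 / (2 * r\<^sup>2)) r + \<rho> r / 2"
proof -
  have hardy_sq: "hardy_sq r = (cmod (w1 r))\<^sup>2 + \<rho>' r / (2 * r) + \<rho> r / (4 * r\<^sup>2)"
    unfolding hardy_sq_def \<rho>'_def \<rho>_def cmod_power2 using assms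
    by (simp add: field_simps power2_eq_square)
  have "energy_density (\<lambda>r. 1 / (2 * r)) (\<lambda>r. - 1 / (2 * r\<^sup>2)) r + \<rho> r / 2
      - (hardy_sq r + r\<^sup>2 * \<rho> r / 16) = ((of_int k)\<^sup>2 - 1) * \<rho> r / r\<^sup>2"
    unfolding hardy_sq energy_density_def pot_def using assms
    by (simp add: field_simps power2_eq_square)
  moreover have "0 \<le> ((of_int k)\<^sup>2 - 1) * \<rho> r / r\<^sup>2"
    using one_le_k_sq \<rho>_nonneg[of r] by simp
  ultimately show ?thesis
    by linarith
qed

lemma set_integrable_hardy_sq_plus: "set_integrable lborel {0<..} (\<lambda>r. hardy_sq r + r\<^sup>2 * \<rho> r / 16)"
proof (rule set_integrable_Ioi_if_Icc_bounded(1))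
  show cont: "continuous_on {0<..} (\<lambda>r. hardy_sq r + r\<^sup>2 * \<rho> r / 16)"
    by (intro continuous_intros continuous_on_hardy_sq continuous_on_\<rho>) auto
  show nonneg: "0 \<le> hardy_sq r + r\<^sup>2 * \<rho> r / 16" for r
    using hardy_sq_nonneg[of r] \<rho>_nonneg[of r] by simp
  fix a' b' :: real assume ab': "0 < a'" "a' \<le> b'"
  let ?g = "\<lambda>r::real. 1 / (2 * r)"
  have g: "(?g has_real_derivative - 1 / (2 * r\<^sup>2)) (at r)" if "0 < r" for r
    using that by (auto intro!: derivative_eq_intros simp: power2_eq_square field_simps)
  have boundary: "boundary_term ?g r = \<rho>' r / 2 + \<rho> r / (2 * r)" for r
    by (simp add: boundary_term_def)
  obtain a where a: "0 < a" "a < a'" "- (1/2) < boundary_term ?g a"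
    using ex_near_0_deriv_half_plus_div_gt[OF set_integrable_\<rho> \<rho>_nonneg \<rho>_has_real_derivative, of "1/2" a'] ab'
    unfolding boundary by auto
  obtain b where b: "b' < b" "boundary_term ?g b < 1/2"
    using ex_near_top_deriv_half_plus_div_lt[OF set_integrable_\<rho> \<rho>_nonneg \<rho>_has_real_derivative, of "1/2" b']
    unfolding boundary by auto
  have "(LINT r:{a'..b'}|lborel. hardy_sq r + r\<^sup>2 * \<rho> r / 16)
      \<le> (LINT r:{a..b}|lborel. quad_density r) - boundary_term ?g a + boundary_term ?g b
        + (LINT r:{a..b}|lborel. \<rho> r / 2)"
    using a b ab' hardy_sq_plus_le_energy_density
    by (intro integral_Icc_le_by_multiplier[OF g _ _ cont nonneg])
      (auto intro!: continuous_intros continuous_on_\<rho>)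
  also have "\<dots> \<le> (LINT r:{0<..}|lborel. \<bar>quad_density r\<bar>) + 1 + (LINT r:{0<..}|lborel. \<rho> r / 2)"
  proof -
    have "(LINT r:{a..b}|lborel. quad_density r) \<le> (LINT r:{a..b}|lborel. \<bar>quad_density r\<bar>)"
      using a by (intro set_integral_mono set_integrable_abs set_integrable_subset[OF set_integrable_quad_density]) auto
    also have "\<dots> \<le> (LINT r:{0<..}|lborel. \<bar>quad_density r\<bar>)"
      using a by (intro set_integral_mono_set_nonneg set_integrable_abs set_integrable_quad_density) auto
    finally have "(LINT r:{a..b}|lborel. quad_density r) \<le> (LINT r:{0<..}|lborel. \<bar>quad_density r\<bar>)" .
    moreover have "(LINT r:{a..b}|lborel. \<rho> r / 2) \<le> (LINT r:{0<..}|lborel. \<rho> r / 2)"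
      using a \<rho>_nonneg by (intro set_integral_mono_set_nonneg set_integrable_divide set_integrable_\<rho>) auto
    ultimately show ?thesis
      using a b by linarith
  qed
  finally show "(LINT r:{a'..b'}|lborel. hardy_sq r + r\<^sup>2 * \<rho> r / 16)
      \<le> (LINT r:{0<..}|lborel. \<bar>quad_density r\<bar>) + 1 + (LINT r:{0<..}|lborel. \<rho> r / 2)" .
qed

lemma set_integrable_hardy_sq: "set_integrable lborel {0<..} hardy_sq"
  using set_integrable_hardy_sq_plus continuous_on_hardy_sq
  by (rule set_integrable_Ioi_if_abs_le) (simp add: hardy_sq_nonneg \<rho>_nonneg)

lemma set_integrable_r_mult_\<rho>: "set_integrable lborel {0<..} (\<lambda>r. r * \<rho> r)"
proof (rule set_integrable_Ioi_if_abs_le)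
  show "set_integrable lborel {0<..} (\<lambda>r. \<rho> r + 16 * (hardy_sq r + r\<^sup>2 * \<rho> r / 16))"
    by (rule set_integral_add(1)[OF set_integrable_\<rho> set_integrable_mult_right[OF set_integrable_hardy_sq_plus]])
  show "continuous_on {0<..} (\<lambda>r. r * \<rho> r)"
    by (intro continuous_intros continuous_on_\<rho>)
  fix r :: real assume "0 < r"
  have "r \<le> 1 + r\<^sup>2"
    using sum_squares_bound[of r 1] \<open>0 < r\<close> by (simp add: power2_eq_square)
  then have "r * \<rho> r \<le> \<rho> r + r\<^sup>2 * \<rho> r"
    using \<rho>_nonneg[of r] mult_right_mono[of r "1 + r\<^sup>2" "\<rho> r"] by (simp add: algebra_simps)
  then show "\<bar>r * \<rho> r\<bar> \<le> \<rho> r + 16 * (hardy_sq r + r\<^sup>2 * \<rho> r / 16)"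
    using \<open>0 < r\<close> \<rho>_nonneg[of r] hardy_sq_nonneg[of r] by simp
qed

definition sqrt_r_w :: "real \<Rightarrow> complex" where "sqrt_r_w r = complex_of_real (sqrt r) * w r"

lemma sqrt_r_w_has_vector_derivative:
  assumes "0 < r"
  shows "(sqrt_r_w has_vector_derivative complex_of_real (sqrt r) * (w1 r + w r / complex_of_real (2 * r))) (at r)"
proof -
  have "((\<lambda>x. complex_of_real (sqrt x)) has_vector_derivative complex_of_real (inverse (sqrt r) / 2)) (at r)"
    by (rule has_vector_derivative_of_real[OF DERIV_real_sqrt[OF assms]])
  from has_vector_derivative_mult[OF this w_has_vector_derivative[OF assms]]
  have "(sqrt_r_w has_vector_derivative complex_of_real (sqrt r) * w1 r + complex_of_real (inverse (sqrt r) / 2) * w r) (at r)"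
    unfolding sqrt_r_w_def .
  moreover have "inverse (sqrt r) / 2 = sqrt r / (2 * r)"
    using assms by (simp add: field_simps flip: real_sqrt_mult)
  ultimately show ?thesis
    by (simp add: algebra_simps)
qed

lemma norm_sqrt_r_w_sq: "0 < r \<Longrightarrow> (cmod (sqrt_r_w r))\<^sup>2 = r * \<rho> r"
  unfolding sqrt_r_w_def \<rho>_def by (simp add: norm_mult power_mult_distrib)

lemma norm_sqrt_r_w_deriv_le:
  assumes "0 < r" "r \<le> b" "0 < t"
  shows "cmod (complex_of_real (sqrt r) * (w1 r + w r / complex_of_real (2 * r))) \<le> hardy_sq r / (2 * t) + t * b / 2"
proof -
  \<comment> \<open>AM-GM, the left-hand side being \<open>\<surd>r \<surd>hardy_sq\<close>.\<close>
  have "2 * sqrt (hardy_sq r) * (t * sqrt r) \<le> hardy_sq r + t\<^sup>2 * r"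
    using sum_squares_bound[of "sqrt (hardy_sq r)" "t * sqrt r"] assms hardy_sq_nonneg[of r]
    by (simp add: power_mult_distrib)
  moreover have "t\<^sup>2 * r \<le> t\<^sup>2 * b"
    using assms by (intro mult_left_mono) auto
  ultimately have "2 * t * (sqrt r * sqrt (hardy_sq r)) \<le> hardy_sq r + t\<^sup>2 * b"
    by (simp add: algebra_simps)
  moreover have "cmod (complex_of_real (sqrt r) * (w1 r + w r / complex_of_real (2 * r))) = sqrt r * sqrt (hardy_sq r)"
    unfolding hardy_sq_def using assms by (simp add: norm_mult)
  ultimately show ?thesis
    using assms by (simp add: field_simps power2_eq_square)
qed

lemma norm_sqrt_r_w_diff_le:
  assumes "0 < a" "a \<le> b" "0 < t"
  shows "cmod (sqrt_r_w b - sqrt_r_w a) \<le> (LINT r:{a..b}|lborel. hardy_sq r) / (2 * t) + t * b\<^sup>2 / 2"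
proof -
  define v' where "v' r = complex_of_real (sqrt r) * (w1 r + w r / complex_of_real (2 * r))" for r
  have v'_cont: "continuous_on {a..b} v'"
    unfolding v'_def using assms
    by (intro continuous_intros continuous_on_subset[OF continuous_on_w] continuous_on_subset[OF continuous_on_w1]) auto
  have hardy_int: "set_integrable lborel {a..b} hardy_sq"
    using continuous_on_hardy_sq assms(1) by (rule set_integrable_Icc_if_continuous_on_Ioi)
  have "sqrt_r_w b - sqrt_r_w a = (LINT r:{a..b}|lborel. v' r)"
    using assms v'_cont sqrt_r_w_has_vector_derivative unfolding v'_def
    by (intro set_integral_Icc_FTC[symmetric]) auto
  also have "cmod \<dots> \<le> (LINT r:{a..b}|lborel. cmod (v' r))"
    using v'_cont by (intro set_integral_norm_bound borel_integrable_atLeastAtMost')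
  also have "\<dots> \<le> (LINT r:{a..b}|lborel. hardy_sq r / (2 * t) + t * b / 2)"
  proof (rule set_integral_mono)
    show "set_integrable lborel {a..b} (\<lambda>r. cmod (v' r))"
      using v'_cont by (intro borel_integrable_atLeastAtMost' continuous_intros)
    show "set_integrable lborel {a..b} (\<lambda>r. hardy_sq r / (2 * t) + t * b / 2)"
      by (intro set_integral_add(1) set_integrable_divide hardy_int borel_integrable_atLeastAtMost' continuous_intros)
  qed (use assms norm_sqrt_r_w_deriv_le in \<open>auto simp: v'_def\<close>)
  also have "\<dots> = (LINT r:{a..b}|lborel. hardy_sq r) / (2 * t) + t * b / 2 * (b - a)"
  proof -
    have const: "set_integrable lborel {a..b} (\<lambda>r. t * b / 2)"
      by (intro borel_integrable_atLeastAtMost' continuous_intros)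
    show ?thesis
      using set_integral_add(2)[OF set_integrable_divide[OF hardy_int] const] assms by (simp add: set_integral_const)
  qed
  also have "t * b / 2 * (b - a) \<le> t * b\<^sup>2 / 2"
    using assms by (simp add: power2_eq_square algebra_simps)
  finally show ?thesis
    by simp
qed

lemma norm_sqrt_r_w_le_if_hardy_sq_small:
  assumes s: "0 < s" and b: "0 < b"
    and small: "\<And>a. 0 < a \<Longrightarrow> a \<le> b \<Longrightarrow> (LINT r:{a..b}|lborel. hardy_sq r) \<le> s\<^sup>2"
  shows "cmod (sqrt_r_w b) \<le> 2 * s * b"
proof (rule ccontr)
  assume big: "\<not> cmod (sqrt_r_w b) \<le> 2 * s * b"
  \<comment> \<open>Then \<open>|sqrt_r_w|\<close> stays above \<open>s b\<close> on \<open>(0, b]\<close>, forcing \<open>\<rho> \<ge> s\<^sup>2 b\<^sup>2 / r\<close> there.\<close>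
  have "s\<^sup>2 * b\<^sup>2 / a \<le> \<rho> a" if a: "0 < a" "a \<le> b" for a
  proof -
    have "cmod (sqrt_r_w b - sqrt_r_w a) \<le> (LINT r:{a..b}|lborel. hardy_sq r) / (2 * (s / b)) + s / b * b\<^sup>2 / 2"
      using a s b by (intro norm_sqrt_r_w_diff_le) auto
    also have "\<dots> \<le> s\<^sup>2 / (2 * (s / b)) + s / b * b\<^sup>2 / 2"
      using small[OF a] s b by (intro add_right_mono divide_right_mono) auto
    also have "\<dots> = s * b"
      using s b by (simp add: field_simps power2_eq_square)
    finally have "s * b < cmod (sqrt_r_w a)"
      using big norm_triangle_ineq2[of "sqrt_r_w b" "sqrt_r_w a"] by linarith
    then have "(s * b)\<^sup>2 \<le> (cmod (sqrt_r_w a))\<^sup>2"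
      using s b by (intro power_mono) auto
    then show ?thesis
      using norm_sqrt_r_w_sq[OF a(1)] a by (simp add: power_mult_distrib divide_le_eq mult.commute)
  qed
  then show False
    using not_set_integrable_Ioi_if_ge_inverse[OF \<rho>_nonneg, where c="s\<^sup>2 * b\<^sup>2" and d=b] set_integrable_\<rho> s b
    by auto
qed

lemma \<rho>_le_near_0:
  assumes "0 < \<eta>"
  obtains c where "0 < c" "\<And>r. 0 < r \<Longrightarrow> r < c \<Longrightarrow> \<rho> r \<le> \<eta> * r"
proof -
  define s where "s = sqrt \<eta> / 2"
  have s: "0 < s" "4 * s\<^sup>2 = \<eta>"
    using assms by (auto simp: s_def power_divide)
  obtain c where c: "0 < c" and small: "\<And>a b. 0 < a \<Longrightarrow> b < c \<Longrightarrow> (LINT r:{a..b}|lborel. \<bar>hardy_sq r\<bar>) < s\<^sup>2"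
    using set_integral_Icc_small_near_0[OF set_integrable_hardy_sq, of "s\<^sup>2"] s by auto
  have "\<rho> b \<le> \<eta> * b" if b: "0 < b" "b < c" for b
  proof -
    have "cmod (sqrt_r_w b) \<le> 2 * s * b"
      using small[OF _ b(2)] s(1) b(1) hardy_sq_nonneg
      by (intro norm_sqrt_r_w_le_if_hardy_sq_small) (auto intro: less_imp_le)
    then have "(cmod (sqrt_r_w b))\<^sup>2 \<le> (2 * s * b)\<^sup>2"
      by (intro power_mono) auto
    then have "b * \<rho> b \<le> b * (\<eta> * b)"
      using norm_sqrt_r_w_sq[OF b(1)] s by (simp add: power_mult_distrib power2_eq_square algebra_simps)
    then show ?thesis
      using b by simp
  qed
  with c that show ?thesis
    by blast
qed

definition coercive_density :: "real \<Rightarrow> real" where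
  "coercive_density r = (cmod (w1 r))\<^sup>2 + ((of_int k)\<^sup>2 / r\<^sup>2 + r\<^sup>2) * (cmod (w r))\<^sup>2"

lemma coercive_density_nonneg: "0 \<le> coercive_density r"
  by (simp add: coercive_density_def)

lemma continuous_on_coercive_density: "continuous_on {0<..} coercive_density"
  unfolding coercive_density_def by (intro continuous_intros continuous_on_w continuous_on_w1) auto

lemma coercive_density_le_energy_density:
  assumes "0 < r"
  shows "coercive_density r / 32 \<le> energy_density (\<lambda>r. - 3 / (4 * r) + r / 8) (\<lambda>r. 3 / (4 * r\<^sup>2) + 1 / 8) r"
proof -
  have "energy_density (\<lambda>r. - 3 / (4 * r) + r / 8) (\<lambda>r. 3 / (4 * r\<^sup>2) + 1 / 8) r
      = (cmod (w1 r))\<^sup>2 / 2 + (cmod (w1 r + complex_of_real (2 * (- 3 / (4 * r) + r / 8)) * w r))\<^sup>2 / 2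
        + ((of_int k)\<^sup>2 - 5/8) * \<rho> r / r\<^sup>2 + r\<^sup>2 * \<rho> r / 32"
    unfolding energy_density_def pot_def \<rho>'_def \<rho>_def cmod_power2 using assms
    by (simp add: field_simps power2_eq_square)
  moreover have "coercive_density r / 32 = (cmod (w1 r))\<^sup>2 / 32 + (of_int k)\<^sup>2 / 32 * \<rho> r / r\<^sup>2 + r\<^sup>2 * \<rho> r / 32"
    unfolding coercive_density_def \<rho>_def using assms by (simp add: field_simps)
  moreover have "(of_int k)\<^sup>2 / 32 * \<rho> r / r\<^sup>2 \<le> ((of_int k)\<^sup>2 - 5/8) * \<rho> r / r\<^sup>2"
    using one_le_k_sq \<rho>_nonneg[of r] by (intro divide_right_mono mult_right_mono) auto
  ultimately show ?thesis
    by (simp add: add_mono)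
qed

lemma ex_near_0_coercive_boundary_term_ge:
  assumes "0 < \<epsilon>" "0 < a\<^sub>0"
  shows "\<exists>a. 0 < a \<and> a < a\<^sub>0 \<and> - \<epsilon> \<le> boundary_term (\<lambda>r. - 3 / (4 * r) + r / 8) a"
proof -
  obtain c where c: "0 < c" "\<And>r. 0 < r \<Longrightarrow> r < c \<Longrightarrow> \<rho> r \<le> 2 * \<epsilon> / 5 * r"
    using \<rho>_le_near_0[of "2 * \<epsilon> / 5"] assms by auto
  obtain a where a: "0 < a" "a < min a\<^sub>0 c" "- (\<epsilon> / 2) < \<rho>' a / 2 + \<rho> a / (2 * a)"
    using ex_near_0_deriv_half_plus_div_gt[OF set_integrable_\<rho> \<rho>_nonneg \<rho>_has_real_derivative, of "\<epsilon> / 2" "min a\<^sub>0 c"]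
      assms c by auto
  \<comment> \<open>The multiplier differs from the Hardy multiplier \<open>1/(2r)\<close> by \<open>-5/(4r) + r/8\<close>, controlled by \<open>\<rho> = o(r)\<close>.\<close>
  have "\<rho> a / a \<le> 2 * \<epsilon> / 5"
    using c(2)[of a] a by (simp add: divide_le_eq)
  moreover have "0 \<le> a / 8 * \<rho> a"
    using a \<rho>_nonneg[of a] by simp
  moreover have "boundary_term (\<lambda>r. - 3 / (4 * r) + r / 8) a
      = \<rho>' a / 2 + \<rho> a / (2 * a) - 5 / 4 * (\<rho> a / a) + a / 8 * \<rho> a"
    unfolding boundary_term_def using a by (simp add: field_simps)
  ultimately show ?thesis
    using a by (intro exI[of _ a]) auto
qed

lemma ex_near_top_coercive_boundary_term_lt:
  assumes "0 < \<epsilon>"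
  shows "\<exists>b. b\<^sub>0 < b \<and> boundary_term (\<lambda>r. - 3 / (4 * r) + r / 8) b < \<epsilon>"
  using ex_near_top_deriv_half_plus_mult_lt[OF set_integrable_\<rho> \<rho>_nonneg set_integrable_r_mult_\<rho>
      \<rho>_has_real_derivative continuous_on_\<rho>', of "\<lambda>r. - 3 / (4 * r) + r / 8" \<epsilon> b\<^sub>0] assms
  unfolding boundary_term_def by (auto simp: field_simps)

lemma integral_Icc_coercive_density_le:
  assumes ab': "0 < a'" "a' \<le> b'"
  shows "(LINT r:{a'..b'}|lborel. coercive_density r / 32) \<le> (LINT r:{0<..}|lborel. quad_density r)"
proof (rule field_le_epsilon)
  fix \<epsilon> :: real assume "0 < \<epsilon>"
  let ?g = "\<lambda>r::real. - 3 / (4 * r) + r / 8"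
  have g: "(?g has_real_derivative 3 / (4 * r\<^sup>2) + 1 / 8) (at r)" if "0 < r" for r
    using that by (auto intro!: derivative_eq_intros simp: power2_eq_square field_simps)
  obtain c C where c: "0 < c" and tail: "\<And>a b. 0 < a \<Longrightarrow> a \<le> c \<Longrightarrow> C \<le> b \<Longrightarrow>
      \<bar>(LINT r:{0<..}|lborel. quad_density r) - (LINT r:{a..b}|lborel. quad_density r)\<bar> < \<epsilon> / 3"
    using set_integral_Icc_approx_Ioi[OF set_integrable_quad_density, of "\<epsilon> / 3"] \<open>0 < \<epsilon>\<close> by auto
  obtain a where a: "0 < a" "a < min a' c" "- (\<epsilon> / 3) \<le> boundary_term ?g a"
    using ex_near_0_coercive_boundary_term_ge[of "\<epsilon> / 3" "min a' c"] \<open>0 < \<epsilon>\<close> ab' c by auto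
  obtain b where b: "max b' C < b" "boundary_term ?g b < \<epsilon> / 3"
    using ex_near_top_coercive_boundary_term_lt[of "\<epsilon> / 3" "max b' C"] \<open>0 < \<epsilon>\<close> by auto
  have "(LINT r:{a'..b'}|lborel. coercive_density r / 32)
      \<le> (LINT r:{a..b}|lborel. quad_density r) - boundary_term ?g a + boundary_term ?g b
        + (LINT r:{a..b}|lborel. 0)"
    using a b ab' coercive_density_le_energy_density
    by (intro integral_Icc_le_by_multiplier[OF g])
      (auto intro!: continuous_intros continuous_on_coercive_density coercive_density_nonneg)
  also have "\<dots> < (LINT r:{0<..}|lborel. quad_density r) + \<epsilon>"
  proof -
    have "\<bar>(LINT r:{0<..}|lborel. quad_density r) - (LINT r:{a..b}|lborel. quad_density r)\<bar> < \<epsilon> / 3"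
      using a b by (intro tail) auto
    then show ?thesis
      using a(3) b(2) unfolding abs_less_iff by simp
  qed
  finally show "(LINT r:{a'..b'}|lborel. coercive_density r / 32) \<le> (LINT r:{0<..}|lborel. quad_density r) + \<epsilon>"
    by simp
qed

lemma coercivity:
  "1/32 * ((LINT r:{0<..}|lborel. (cmod (w1 r))\<^sup>2)
          + (LINT r:{0<..}|lborel. (of_int k ^ 2 / r\<^sup>2 + r\<^sup>2) * (cmod (w r))\<^sup>2))
     \<le> Re (ip (Fop k \<beta> lam w w2) w)"
proof -
  have cont: "continuous_on {0<..} (\<lambda>r. coercive_density r / 32)"
    by (intro continuous_intros continuous_on_coercive_density) auto
  have nonneg: "0 \<le> coercive_density r / 32" for r
    by (simp add: coercive_density_nonneg)
  note bound = set_integrable_Ioi_if_Icc_bounded[OF cont nonneg integral_Icc_coercive_density_le]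
  have int: "set_integrable lborel {0<..} coercive_density"
    using set_integrable_mult_right[OF bound(1), of 32] by simp
  have int_w1: "set_integrable lborel {0<..} (\<lambda>r. (cmod (w1 r))\<^sup>2)"
    using int by (rule set_integrable_Ioi_if_abs_le) (auto intro!: continuous_intros continuous_on_w1 simp: coercive_density_def)
  have int_w: "set_integrable lborel {0<..} (\<lambda>r. (of_int k ^ 2 / r\<^sup>2 + r\<^sup>2) * (cmod (w r))\<^sup>2)"
    using int by (rule set_integrable_Ioi_if_abs_le) (auto intro!: continuous_intros continuous_on_w simp: coercive_density_def)
  have "(LINT r:{0<..}|lborel. coercive_density r) = (LINT r:{0<..}|lborel. (cmod (w1 r))\<^sup>2)
      + (LINT r:{0<..}|lborel. (of_int k ^ 2 / r\<^sup>2 + r\<^sup>2) * (cmod (w r))\<^sup>2)"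
    unfolding coercive_density_def using set_integral_add(2)[OF int_w1 int_w] .
  then show ?thesis
    using bound(2) Re_ip_Fop[of lam] by simp
qed

end

theorem lemma2p1:
  shows "\<exists>C>0. \<forall>(k::int) (\<beta>::real) (lam::real) w w1 w2.
     \<bar>k\<bar> \<ge> 1 \<longrightarrow> Dk k \<beta> w w1 w2 \<longrightarrow>
     C * ((LINT r:{0<..}|lborel. (cmod (w1 r))\<^sup>2)
          + (LINT r:{0<..}|lborel. (of_int k ^ 2 / r\<^sup>2 + r\<^sup>2) * (cmod (w r))\<^sup>2))
       \<le> Re (ip (Fop k \<beta> lam w w2) w)"
proof (intro exI[of _ "1/32"] conjI allI impI)
  fix k :: int and \<beta> lam :: real and w w1 w2 :: "real \<Rightarrow> complex"
  assume "1 \<le> \<bar>k\<bar>" "Dk k \<beta> w w1 w2"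
  then interpret Dk_function k \<beta> w w1 w2
    by unfold_locales
  show "1/32 * ((LINT r:{0<..}|lborel. (cmod (w1 r))\<^sup>2)
          + (LINT r:{0<..}|lborel. (of_int k ^ 2 / r\<^sup>2 + r\<^sup>2) * (cmod (w r))\<^sup>2))
       \<le> Re (ip (Fop k \<beta> lam w w2) w)"
    by (rule coercivity)
qed simp

end
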